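(* Consider the algorithm described in the context, suppose it does not terminate finitely, and suppose there is $\sigma_{\min}>0$ with $\sigma_{\min}(J_k)\ge\sigma_{\min}$ for all $k\in\mathbb{N}$. Let $\epsilon>0$. If $k_1<k_2$ are iterations such that $k\in\mathcal S$ and $\chi_k>\epsilon$ for all $k_1\le k<k_2$, then $$k_2-k_1\le\Big\lfloor\frac{\tau_0\big(f(x_0)-f_{\inf}+r(x_0)\big)+\|c(x_0)\|_2}{\kappa_\Phi\epsilon^2}\Big\rfloor,$$ with $\kappa_\Phi:=\eta\min\{\sigma_u\tau_{\min}\alpha_{\min},\ \tfrac{\sigma_c\sigma_{\min}^2}{2\kappa_c(1+\kappa_{\nabla c}^2)},\ \tfrac{\sigma_c\sigma_{\min}^2\kappa_v\alpha_{\min}}{2\kappa_c}\}$. Moreover, the maximum number of iterations before $\chi_k\le\epsilon$ for some iteration $k$ is $$\Big(\max\Big\{0,\Big\lceil\frac{\log\big(\tau_{\min}/(\alpha_0(\tau_{\min}L_g+L_J))\big)}{\log\xi}\Big\rceil\Big\}+1\Big)\Big\lfloor\frac{\tau_0\big(f(x_0)-f_{\inf}+r(x_0)\big)+\|c(x_0)\|_2}{\kappa_\Phi\epsilon^2}\Big\rfloor.$$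
   Context: Problem: $\min_{x\in\mathbb{R}^n} f(x)+r(x)$ subject to $c(x)=0$, where $f:\mathbb{R}^n\to\mathbb{R}$ and $c:\mathbb{R}^n\to\mathbb{R}^m$ ($m\le n$) are continuously differentiable and $r:\mathbb{R}^n\to\mathbb{R}_{\ge 0}$ is convex. Write $g(x)=\nabla f(x)$, $J(x)=\nabla c(x)^T$, and $f_k=f(x_k)$, $g_k=g(x_k)$, $c_k=c(x_k)$, $J_k=J(x_k)$, $r_k=r(x_k)$. All norms are Euclidean (spectral norm for matrices). Merit function: $\Phi_\tau(x)=\tau(f(x)+r(x))+\|c(x)\|_2$. Algorithm: inputs $x_0$, $\alpha_0>0$, $\tau_{-1}>0$; constants $\kappa_v>0$, $\sigma_c,\epsilon_\tau,\xi,\eta\in(0,1)$, $\sigma_u\in(0,1/2]$, $\bar\sigma_u:=\sigma_u+\tfrac12$. For $k=0,1,\dots$: 1. If $J_k^Tc_k\ne0$, compute $v_k$ with $v_k\in\mathrm{Range}(J_k^T)$, $\|v_k\|_2\le\kappa_v\alpha_k\|J_k^Tc_k\|_2$, $\|c_k+J_kv_k\|_2\le\|c_k+J_kv_k^c\|_2$, where $v_k^c=-\beta_k^cJ_k^Tc_k$ with $\beta_k^c$ minimizing $\tfrac12\|c_k-\beta J_kJ_k^Tc_k\|_2^2$ over $0\le\beta\le\kappa_v\alpha_k$. Otherwise set $v_k=0$, and if $c_k\ne0$ terminate. 2. Let $u_k$ be the unique minimizer of $g_k^Tu+\tfrac1{2\alpha_k}\|u\|_2^2+r(x_k+v_k+u)$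 subject to $J_ku=0$; set $s_k=v_k+u_k$. If $s_k=0$, terminate. By the optimality conditions there exist $g_{r,k}\in\partial r(x_k+s_k)$ and $y_k\in\mathbb{R}^m$ with $g_k+\tfrac1{\alpha_k}u_k+g_{r,k}-J_k^Ty_k=0$; $g_{r,k},y_k$ denote such vectors. 3. Let $D_k:=g_k^Ts_k+\bar\sigma_u\|s_k\|_2^2/\alpha_k+r(x_k+s_k)-r_k$; $\tau_{k,\mathrm{trial}}=\infty$ if $D_k\le0$, else $\tau_{k,\mathrm{trial}}=(1-\sigma_c)(\|c_k\|_2-\|c_k+J_kv_k\|_2)/D_k$. Set $\tau_k=\tau_{k-1}$ if $\tau_{k-1}\le\tau_{k,\mathrm{trial}}$, else $\tau_k=\min\{(1-\epsilon_\tau)\tau_{k-1},\tau_{k,\mathrm{trial}}\}$. 4. With $\Delta q_k(s,\tau):=-\tau(g_k^Ts+\tfrac1{2\alpha_k}\|s\|_2^2+r(x_k+s)-r_k)+\|c_k\|_2-\|c_k+J_ks\|_2$: if $\Phi_{\tau_k}(x_k+s_k)\le\Phi_{\tau_k}(x_k)-\eta\Delta q_k(s_k,\tau_k)$ set $x_{k+1}=x_k+s_k$, $\alpha_{k+1}=\alpha_k$ (iteration $k$ successful; $\mathcal S$ is the set of successful iterations); else $x_{k+1}=x_k$, $\alpha_{k+1}=\xi\alpha_k$. KKT residual: $\chi_k:=\max\{\|g_k+g_{r,k}-J_k^Ty_k\|_2,\ \|c_k\|_2\}$. Standing assumption: there is an open convex set $\mathcal X$ containing all iterates $x_k$ and trial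 points $x_k+s_k$, and positive constants such that for all $x\in\mathcal X$: $f(x)\ge f_{\inf}$, $\|\nabla f(x)\|_2\le\kappa_{\nabla f}$, $\|c(x)\|_2\le\kappa_c$, $\|J(x)\|_2\le\kappa_{\nabla c}$, every $w\in\partial r(x)$ has $\|w\|_2\le\kappa_{\partial r}$; $\nabla f$ is $L_g$-Lipschitz and $J$ is $L_J$-Lipschitz on $\mathcal X$. Constants: with $K:=2\kappa_v\kappa_{\nabla c}(\kappa_{\nabla f}+\kappa_{\partial r}+\bar\sigma_u\kappa_c\kappa_v\kappa_{\nabla c})$, $\tau_{\min,\mathrm{trial}}:=\min\{(1-\sigma_c)\kappa_v\sigma_{\min}^2/K,\ (1-\sigma_c)(\sigma_{\min}/\kappa_{\nabla c})^2/(K\alpha_0)\}$, $\tau_{\min}:=\min\{\tau_0,(1-\epsilon_\tau)\tau_{\min,\mathrm{trial}}\}$, and $\alpha_{\min}:=\min\{\alpha_0,\xi\tau_{\min}/(\tau_{\min}L_g+L_J)\}$. *)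

theory Defs
  imports "HOL-Analysis.Analysis"
begin

definition subgrad :: "('a::real_inner \<Rightarrow> real) \<Rightarrow> 'a \<Rightarrow> 'a \<Rightarrow> bool" where
  "subgrad r z w \<longleftrightarrow> (\<forall>z'. r z' \<ge> r z + inner w (z' - z))"

definition spec_norm :: "real^'n^'m \<Rightarrow> real" where
  "spec_norm A = onorm (\<lambda>h. A *v h)"

text \<open>Smallest singular value of an m x n matrix with m \<le> n,
  i.e. sigma_m(A) = min over unit w of the norm of A^T w.\<close>
definition sigma_min_mat :: "real^'n^'m \<Rightarrow> real" where
  "sigma_min_mat A = Inf {norm (transpose A *v w) | w. norm w = 1}"

definition merit :: "('a \<Rightarrow> real) \<Rightarrow> ('a \<Rightarrow> real) \<Rightarrow> ('a \<Rightarrow> 'b::real_normed_vector)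
    \<Rightarrow> real \<Rightarrow> 'a \<Rightarrow> real" where
  "merit f r c t z = t * (f z + r z) + norm (c z)"

end

theory Submission
  imports Defs
begin

(* Let M_k = tau_k (f(x_k) - f_inf + r(x_k)) + ||c(x_k)||. It is nonnegative, and it never
   increases, because tau_k never increases and an accepted step lowers Phi_{tau_k} by eta times the
   model decrease. The Cauchy decrease of the linearized constraint, together with
   sigma_min(J_k) >= sigma_min, keeps the trial value of tau bounded away from zero, so
   tau_k >= tau_min. By the descent lemmas for f and c every iteration with
   alpha_k <= tau_min / (tau_min L_g + L_J) is successful; hence alpha_k >= alpha_min, and since
   alpha_k = alpha_0 xi^(number of unsuccessful iterations so far) there are at most
   U = max {0, ceiling (log (tau_min / (alpha_0 (tau_min L_g + L_J))) / log xi)} unsuccessful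
   iterations in total. Finally the model decrease dominates (kappa_Phi / eta) chi_k^2, so every
   successful iteration with chi_k > eps lowers M by kappa_Phi eps^2, and at most B of them fit
   below M_0. *)

section \<open>Norms of matrices\<close>

lemma norm_mult_vec_le_spec_norm: "norm ((A::real^'n^'m) *v h) \<le> spec_norm A * norm h"
  unfolding spec_norm_def by (rule onorm) simp

lemma spec_norm_nonneg: "0 \<le> spec_norm (A::real^'n^'m)"
  unfolding spec_norm_def by (rule onorm_pos_le) simp

lemma norm_transpose_mult_vec_le: "norm (transpose (A::real^'n^'m) *v w) \<le> spec_norm A * norm w"
proof -
  let ?a = "transpose A *v w"
  have "norm ?a * norm ?a = ?a \<bullet> ?a"
    by (metis power2_eq_square power2_norm_eq_inner)
  also have "\<dots> = w \<bullet> (A *v ?a)"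
    by (simp add: dot_lmul_matrix)
  also have "\<dots> \<le> norm w * (spec_norm A * norm ?a)"
    by (rule order_trans[OF norm_cauchy_schwarz mult_left_mono[OF norm_mult_vec_le_spec_norm]]) simp
  finally show ?thesis
    by (cases "?a = 0") (simp_all add: spec_norm_nonneg algebra_simps)
qed

lemma sigma_min_mat_mult_norm_le: "sigma_min_mat (A::real^'n^'m) * norm w \<le> norm (transpose A *v w)"
proof (cases "w = 0")
  case False
  have "sigma_min_mat A \<le> norm (transpose A *v ((1 / norm w) *\<^sub>R w))"
    unfolding sigma_min_mat_def using False
    by (intro cInf_lower) (auto intro: bdd_belowI[where m=0])
  then show ?thesis
    using False by (simp add: matrix_vector_mult_scaleR field_simps)
qed simp

lemma sigma_min_mat_le_spec_norm: "sigma_min_mat (A::real^'n^'m) \<le> spec_norm A"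
proof -
  obtain i :: 'm where True by simp
  have "sigma_min_mat A * norm (axis i (1::real)) \<le> spec_norm A * norm (axis i (1::real))"
    by (rule order_trans[OF sigma_min_mat_mult_norm_le norm_transpose_mult_vec_le])
  then show ?thesis by simp
qed

lemma norm_diff_scaleR_sq_le:
  fixes c y :: "'a::real_inner"
  assumes "0 \<le> b" and "b * (norm y)\<^sup>2 \<le> c \<bullet> y"
  shows "(norm (c - b *\<^sub>R y))\<^sup>2 \<le> (norm c)\<^sup>2 - b * (c \<bullet> y)"
proof -
  have "(norm (c - b *\<^sub>R y))\<^sup>2 = (c - b *\<^sub>R y) \<bullet> (c - b *\<^sub>R y)"
    by (rule power2_norm_eq_inner)
  also have "\<dots> = c \<bullet> c - 2 * b * (c \<bullet> y) + b * (b * (y \<bullet> y))"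
    by (simp add: inner_diff_left inner_diff_right inner_commute[of y c] algebra_simps)
  also have "\<dots> = (norm c)\<^sup>2 - 2 * b * (c \<bullet> y) + b * (b * (norm y)\<^sup>2)"
    by (simp add: power2_norm_eq_inner)
  also have "\<dots> \<le> (norm c)\<^sup>2 - 2 * b * (c \<bullet> y) + b * (c \<bullet> y)"
    using mult_left_mono[OF assms(2,1)] by simp
  finally show ?thesis by simp
qed

lemma half_sq_decrease_le_diff:
  fixes a b d :: real
  assumes "0 < a" "0 \<le> b" "0 \<le> d" "b\<^sup>2 \<le> a\<^sup>2 - d"
  shows "d / (2 * a) \<le> a - b"
proof -
  have "b \<le> a" using power2_le_imp_le[of b a] assms by linarith
  then have "d \<le> (a - b) * (a + b)" using assms by (simp add: power2_eq_square algebra_simps)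
  also have "\<dots> \<le> (a - b) * (2 * a)" using \<open>b \<le> a\<close> by (intro mult_left_mono) auto
  finally show ?thesis using assms(1) by (simp add: pos_divide_le_eq)
qed

lemma exists_unit_step_quadratic_decrease:
  fixes L a :: real
  assumes "0 < L" "0 < a"
  shows "\<exists>t\<in>{0..1}. L / 2 * (t * a)\<^sup>2 - t * a \<le> - min (1 / (2 * L)) (a / 2)"
proof (cases "a * L \<le> 1")
  case True
  have "L / 2 * (1 * a)\<^sup>2 - 1 * a \<le> a / 2 - a"
    using mult_right_mono[OF True, of "a / 2"] assms by (simp add: power2_eq_square algebra_simps)
  then show ?thesis by (intro bexI[of _ 1]) auto
next
  case False
  have "L / 2 * (1 / (a * L) * a)\<^sup>2 - 1 / (a * L) * a = - (1 / (2 * L))"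
    using assms by (simp add: field_simps power2_eq_square)
  then show ?thesis using False assms by (intro bexI[of _ "1 / (a * L)"]) auto
qed

lemma lessThan_Suc_diff:
  "{..<Suc k} - A = (if k \<in> A then {..<k} - A else insert k ({..<k} - A))"
  by (auto simp: less_Suc_eq)

section \<open>Taylor bounds under Lipschitz derivatives\<close>

lemma convex_segment_point:
  assumes "convex X" "z \<in> X" "z + h \<in> X" "0 \<le> t" "t \<le> 1"
  shows "z + t *\<^sub>R h \<in> X"
proof -
  have "z + t *\<^sub>R h = (1 - t) *\<^sub>R z + t *\<^sub>R (z + h)" by (simp add: algebra_simps)
  then show ?thesis using convexD_alt[OF assms(1-3), of t] assms(4,5) by simp
qed

(* Along the segment, t \<mapsto> e \<bullet> F (z + t h) - t (e \<bullet> F' z h) - |e| L t^2 |h|^2 / 2 is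
   nonincreasing for the remainder e, which yields e \<bullet> e \<le> |e| L |h|^2 / 2. *)
lemma norm_taylor_remainder_le:
  fixes F :: "'a::real_normed_vector \<Rightarrow> 'b::real_inner"
  assumes deriv: "\<And>z. (F has_derivative F' z) (at z)"
    and "convex X" "z \<in> X" "z + h \<in> X"
    and lip: "\<And>z z'. z \<in> X \<Longrightarrow> z' \<in> X \<Longrightarrow> onorm (\<lambda>h. F' z h - F' z' h) \<le> L * norm (z - z')"
    and "0 \<le> L"
  shows "norm (F (z + h) - F z - F' z h) \<le> L / 2 * (norm h)\<^sup>2"
proof -
  define e where "e = F (z + h) - F z - F' z h"
  define phi where "phi t = e \<bullet> F (z + t *\<^sub>R h) - t * (e \<bullet> F' z h) - norm e * L / 2 * t\<^sup>2 * (norm h)\<^sup>2" for t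
  have "phi 1 \<le> phi 0"
  proof (rule DERIV_nonpos_imp_nonincreasing[of 0 1 phi])
    fix t :: real assume t: "0 \<le> t" "t \<le> 1"
    have lin: "linear (F' w)" for w using has_derivative_linear[OF deriv] .
    have "((\<lambda>t. z + t *\<^sub>R h) has_derivative (\<lambda>d. d *\<^sub>R h)) (at t)"
      by (auto intro!: derivative_eq_intros)
    from has_derivative_inner_right[OF has_derivative_compose[OF this deriv], of e]
    have seg: "((\<lambda>t. e \<bullet> F (z + t *\<^sub>R h)) has_real_derivative e \<bullet> F' (z + t *\<^sub>R h) h) (at t)"
      by (rule has_derivative_imp_has_field_derivative) (simp add: linear_cmul[OF lin])
    have d: "(phi has_real_derivative
        e \<bullet> F' (z + t *\<^sub>R h) h - e \<bullet> F' z h - norm e * L * t * (norm h)\<^sup>2) (at t)"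
      unfolding phi_def by (rule seg derivative_eq_intros refl | simp)+
    have bl: "bounded_linear (\<lambda>w. F' (z + t *\<^sub>R h) w - F' z w)"
      using has_derivative_bounded_linear[OF deriv] by (intro bounded_linear_sub)
    have "e \<bullet> F' (z + t *\<^sub>R h) h - e \<bullet> F' z h \<le> norm e * norm (F' (z + t *\<^sub>R h) h - F' z h)"
      by (metis inner_diff_right norm_cauchy_schwarz)
    also have "\<dots> \<le> norm e * (L * norm (t *\<^sub>R h) * norm h)"
      using lip[OF convex_segment_point[OF assms(2-4) t] assms(3)] onorm[OF bl, of h]
      by (intro mult_left_mono) (auto intro: order_trans[OF _ mult_right_mono])
    also have "\<dots> = norm e * L * t * (norm h)\<^sup>2" using t by (simp add: power2_eq_square)
    finally show "\<exists>y. (phi has_real_derivative y) (at t) \<and> y \<le> 0" using d by auto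
  qed simp
  then have "e \<bullet> (F (z + h) - F z - F' z h) \<le> norm e * (L / 2 * (norm h)\<^sup>2)"
    unfolding phi_def by (simp add: inner_diff_right algebra_simps)
  then have "norm e * norm e \<le> norm e * (L / 2 * (norm h)\<^sup>2)"
    by (simp add: e_def[symmetric] flip: power2_norm_eq_inner power2_eq_square)
  then show ?thesis unfolding e_def[symmetric]
    using \<open>0 \<le> L\<close> by (cases "e = 0") (simp_all add: mult_le_cancel_left_pos)
qed

lemma lipschitz_gradient_upper_bound:
  fixes f :: "'a::real_inner \<Rightarrow> real"
  assumes "\<And>z. (f has_derivative (\<lambda>h. g z \<bullet> h)) (at z)"
    and "convex X" "z \<in> X" "z + h \<in> X"
    and "\<And>z z'. z \<in> X \<Longrightarrow> z' \<in> X \<Longrightarrow> norm (g z - g z') \<le> L * norm (z - z')"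
    and "0 \<le> L"
  shows "f (z + h) \<le> f z + g z \<bullet> h + L / 2 * (norm h)\<^sup>2"
proof -
  have "onorm (\<lambda>h. g z \<bullet> h - g z' \<bullet> h) \<le> L * norm (z - z')" if "z \<in> X" "z' \<in> X" for z z'
  proof -
    have "onorm (\<lambda>h. (g z - g z') \<bullet> h) \<le> norm (g z - g z') * onorm (\<lambda>h::'a. h)"
      using onorm_inner_right[OF bounded_linear_ident, of "g z - g z'"] by simp
    also have "\<dots> \<le> norm (g z - g z')"
      by (rule mult_left_le[OF onorm_id_le norm_ge_zero])
    also have "\<dots> \<le> L * norm (z - z')"
      using assms(5) that .
    finally show ?thesis by (simp add: inner_diff_left)
  qed
  from norm_taylor_remainder_le[OF assms(1-4) this assms(6)]
  show ?thesis by (smt (verit) real_norm_def abs_le_iff)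
qed

lemma lipschitz_jacobian_linearization_error:
  fixes c :: "real^'n \<Rightarrow> real^'m" and J :: "real^'n \<Rightarrow> real^'n^'m"
  assumes "\<And>z. (c has_derivative (\<lambda>h. J z *v h)) (at z)"
    and "convex X" "z \<in> X" "z + h \<in> X"
    and "\<And>z z'. z \<in> X \<Longrightarrow> z' \<in> X \<Longrightarrow> spec_norm (J z - J z') \<le> L * norm (z - z')"
    and "0 \<le> L"
  shows "norm (c (z + h) - c z - J z *v h) \<le> L / 2 * (norm h)\<^sup>2"
  using assms(5)
  by (intro norm_taylor_remainder_le[OF assms(1-4) _ assms(6)])
    (simp add: spec_norm_def matrix_vector_mult_diff_rdistrib)

section \<open>The algorithm\<close>

locale sqp_data =
  fixes f :: "real^'n \<Rightarrow> real" and g :: "real^'n \<Rightarrow> real^'n"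
    and c :: "real^'n \<Rightarrow> real^'m" and J :: "real^'n \<Rightarrow> real^'n^'m"
    and r :: "real^'n \<Rightarrow> real"
    and x v u :: "nat \<Rightarrow> real^'n" and alpha tau :: "nat \<Rightarrow> real"
    and taum1 eta sigu :: real
begin

definition JTc :: "nat \<Rightarrow> real^'n" where
  "JTc k = transpose (J (x k)) *v c (x k)"

definition step :: "nat \<Rightarrow> real^'n" where
  "step k = v k + u k"

definition sigbar :: real where
  "sigbar = sigu + 1/2"

definition D :: "nat \<Rightarrow> real" where
  "D k = g (x k) \<bullet> step k + sigbar * (norm (step k))\<^sup>2 / alpha k + r (x k + step k) - r (x k)"

definition tau_prev :: "nat \<Rightarrow> real" where
  "tau_prev k = (if k = 0 then taum1 else tau (k - 1))"

definition model_decrease :: "nat \<Rightarrow> real^'n \<Rightarrow> real \<Rightarrow> real" where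
  "model_decrease k w t = - t * (g (x k) \<bullet> w + 1 / (2 * alpha k) * (norm w)\<^sup>2 + r (x k + w) - r (x k))
     + norm (c (x k)) - norm (c (x k) + J (x k) *v w)"

definition successful :: "nat set" where
  "successful = {k. merit f r c (tau k) (x k + step k)
     \<le> merit f r c (tau k) (x k) - eta * model_decrease k (step k) (tau k)}"

definition constr_decrease :: "nat \<Rightarrow> real" where
  "constr_decrease k = norm (c (x k)) - norm (c (x k) + J (x k) *v v k)"

end

locale sqp_run = sqp_data f g c J r x v u alpha tau taum1 eta sigu
  for f :: "real^'n \<Rightarrow> real" and g :: "real^'n \<Rightarrow> real^'n"
    and c :: "real^'n \<Rightarrow> real^'m" and J :: "real^'n \<Rightarrow> real^'n^'m"
    and r :: "real^'n \<Rightarrow> real"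
    and x v u :: "nat \<Rightarrow> real^'n" and alpha tau :: "nat \<Rightarrow> real"
    and taum1 eta sigu :: real +
  fixes gr :: "nat \<Rightarrow> real^'n" and y :: "nat \<Rightarrow> real^'m"
    and kv sigc epstau xi :: real and X :: "(real^'n) set"
    and finf kgf kc kgc kdr Lg LJ sigmin :: real
  assumes f_deriv: "\<And>z. (f has_derivative (\<lambda>h. g z \<bullet> h)) (at z)"
    and c_deriv: "\<And>z. (c has_derivative (\<lambda>h. J z *v h)) (at z)"
    and r_nonneg: "\<And>z. r z \<ge> 0"
    and alpha0_pos: "alpha 0 > 0" and taum1_pos: "taum1 > 0" and kv_pos: "kv > 0"
    and sigc: "0 < sigc" "sigc < 1" and epstau: "0 < epstau" "epstau < 1"
    and xi: "0 < xi" "xi < 1" and eta: "0 < eta" "eta < 1"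
    and sigu: "0 < sigu" "sigu \<le> 1/2"
    and v_range: "\<And>k. JTc k \<noteq> 0 \<Longrightarrow> v k \<in> range (\<lambda>w. transpose (J (x k)) *v w)"
    and v_norm: "\<And>k. JTc k \<noteq> 0 \<Longrightarrow> norm (v k) \<le> kv * alpha k * norm (JTc k)"
    and v_cauchy: "\<And>k. JTc k \<noteq> 0 \<Longrightarrow>
        \<exists>betac. 0 \<le> betac \<and> betac \<le> kv * alpha k
          \<and> (\<forall>beta. 0 \<le> beta \<and> beta \<le> kv * alpha k \<longrightarrow>
               (1/2) * (norm (c (x k) - betac *\<^sub>R (J (x k) *v JTc k)))\<^sup>2
               \<le> (1/2) * (norm (c (x k) - beta *\<^sub>R (J (x k) *v JTc k)))\<^sup>2)
          \<and> norm (c (x k) + J (x k) *v v k) \<le> norm (c (x k) + J (x k) *v (- (betac *\<^sub>R JTc k)))"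
    and v_zero: "\<And>k. JTc k = 0 \<Longrightarrow> v k = 0"
    and JTc_zero: "\<And>k. JTc k = 0 \<Longrightarrow> c (x k) = 0"
    and u_feas: "\<And>k. J (x k) *v u k = 0"
    and gr_subgrad: "\<And>k. subgrad r (x k + step k) (gr k)"
    and kkt: "\<And>k. g (x k) + (1 / alpha k) *\<^sub>R u k + gr k - transpose (J (x k)) *v y k = 0"
    and tau_upd: "\<And>k. tau k = (if D k \<le> 0 then tau_prev k
       else if tau_prev k \<le> (1 - sigc) * constr_decrease k / D k then tau_prev k
       else min ((1 - epstau) * tau_prev k) ((1 - sigc) * constr_decrease k / D k))"
    and succ: "\<And>k. k \<in> successful \<Longrightarrow> x (Suc k) = x k + step k \<and> alpha (Suc k) = alpha k"
    and unsucc: "\<And>k. k \<notin> successful \<Longrightarrow> x (Suc k) = x k \<and> alpha (Suc k) = xi * alpha k"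
    and X_convex: "convex X"
    and x_in_X: "\<And>k. x k \<in> X" and trial_in_X: "\<And>k. x k + step k \<in> X"
    and consts_pos: "kgf > 0" "kc > 0" "kgc > 0" "kdr > 0" "Lg > 0" "LJ > 0"
    and f_lb: "\<And>z. z \<in> X \<Longrightarrow> f z \<ge> finf"
    and g_bd: "\<And>z. z \<in> X \<Longrightarrow> norm (g z) \<le> kgf"
    and c_bd: "\<And>z. z \<in> X \<Longrightarrow> norm (c z) \<le> kc"
    and J_bd: "\<And>z. z \<in> X \<Longrightarrow> spec_norm (J z) \<le> kgc"
    and subgrad_bd: "\<And>z w. z \<in> X \<Longrightarrow> subgrad r z w \<Longrightarrow> norm w \<le> kdr"
    and g_lip: "\<And>z z'. z \<in> X \<Longrightarrow> z' \<in> X \<Longrightarrow> norm (g z - g z') \<le> Lg * norm (z - z')"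
    and J_lip: "\<And>z z'. z \<in> X \<Longrightarrow> z' \<in> X \<Longrightarrow> spec_norm (J z - J z') \<le> LJ * norm (z - z')"
    and sigmin_pos: "sigmin > 0"
    and sigmin_bd: "\<And>k. sigma_min_mat (J (x k)) \<ge> sigmin"
begin

lemma alpha_pos: "alpha k > 0"
proof (induction k)
  case (Suc k) then show ?case using succ[of k] unsucc[of k] xi by (cases "k \<in> successful") auto
qed (use alpha0_pos in auto)

lemma alpha_Suc_le: "alpha (Suc k) \<le> alpha k"
  using succ[of k] unsucc[of k] xi alpha_pos[of k] by (cases "k \<in> successful") auto

lemma alpha_le_alpha0: "alpha k \<le> alpha 0"
  using decseq_SucI[of alpha, OF alpha_Suc_le] by (simp add: decseq_def)

lemma norm_c_le: "norm (c (x k)) \<le> kc"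
  using c_bd x_in_X by blast

lemma norm_g_gr_le: "norm (g (x k) + gr k) \<le> kgf + kdr"
  using norm_triangle_le add_mono[OF g_bd[OF x_in_X] subgrad_bd[OF trial_in_X gr_subgrad]] by blast

lemma sigmin_le_kgc: "sigmin \<le> kgc"
  using sigmin_bd sigma_min_mat_le_spec_norm J_bd[OF x_in_X] by (blast intro: order_trans)

lemma norm_JTc_le: "norm (JTc k) \<le> kgc * norm (c (x k))"
  unfolding JTc_def
  using norm_transpose_mult_vec_le mult_right_mono[OF J_bd[OF x_in_X] norm_ge_zero]
  by (blast intro: order_trans)

lemma norm_JTc_ge: "sigmin * norm (c (x k)) \<le> norm (JTc k)"
  unfolding JTc_def
  using sigma_min_mat_mult_norm_le mult_right_mono[OF sigmin_bd norm_ge_zero]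
  by (blast intro: order_trans)

lemma JTc_eq_0_iff: "JTc k = 0 \<longleftrightarrow> c (x k) = 0"
  using JTc_zero[of k] by (auto simp: JTc_def)

lemma norm_v_le: "norm (v k) \<le> kv * alpha k * norm (JTc k)"
  using v_norm[of k] v_zero[of k] by (cases "JTc k = 0") auto

lemma inner_v_u: "v k \<bullet> u k = 0"
proof (cases "JTc k = 0")
  case False
  then obtain w where "v k = transpose (J (x k)) *v w" using v_range[of k] by auto
  then show ?thesis by (simp add: dot_lmul_matrix u_feas)
qed (simp add: v_zero)

lemma J_mult_step: "J (x k) *v step k = J (x k) *v v k"
  by (simp add: step_def matrix_vector_right_distrib u_feas)

lemma norm_step_sq: "(norm (step k))\<^sup>2 = (norm (v k))\<^sup>2 + (norm (u k))\<^sup>2"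
  unfolding step_def by (rule norm_add_Pythagorean) (simp add: orthogonal_def inner_v_u)

lemma inner_g_gr_u: "(g (x k) + gr k) \<bullet> u k = - (norm (u k))\<^sup>2 / alpha k"
proof -
  have "(g (x k) + (1 / alpha k) *\<^sub>R u k + gr k - transpose (J (x k)) *v y k) \<bullet> u k = 0"
    by (simp only: kkt inner_zero_left)
  then have "(g (x k) + gr k) \<bullet> u k + (1 / alpha k) * (u k \<bullet> u k) = 0"
    by (simp add: inner_add_left inner_diff_left dot_lmul_matrix u_feas algebra_simps)
  then show ?thesis using alpha_pos[of k] by (simp add: power2_norm_eq_inner field_simps)
qed

lemma r_step_le: "r (x k + step k) - r (x k) \<le> gr k \<bullet> step k"
  using gr_subgrad[of k] unfolding subgrad_def
  by (metis add_diff_cancel_left' diff_add_cancel inner_minus_right le_diff_eq minus_diff_eq)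

section \<open>The normal step\<close>

(* A step length allowed in the Cauchy search of Step 1 that is small enough for
   beta * norm (J_k J_k^T c_k)^2 \<le> norm (J_k^T c_k)^2. *)
definition cauchy_beta :: "nat \<Rightarrow> real" where
  "cauchy_beta k = min (kv * alpha k) (1 / kgc\<^sup>2)"

lemma cauchy_beta_pos: "0 < cauchy_beta k"
  using kv_pos alpha_pos[of k] consts_pos by (simp add: cauchy_beta_def)

lemma cauchy_beta_le: "cauchy_beta k \<le> kv * alpha k"
  by (simp add: cauchy_beta_def)

lemma cauchy_beta_mult_kgc_sq_le: "cauchy_beta k * kgc\<^sup>2 \<le> 1"
  using mult_right_mono[of "cauchy_beta k" "1 / kgc\<^sup>2" "kgc\<^sup>2"] consts_pos
  by (simp add: cauchy_beta_def)

lemma norm_lin_constr_sq_le: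
  assumes "JTc k \<noteq> 0"
  shows "(norm (c (x k) + J (x k) *v v k))\<^sup>2 \<le> (norm (c (x k)))\<^sup>2 - cauchy_beta k * (norm (JTc k))\<^sup>2"
proof -
  let ?c = "c (x k)" and ?Ja = "J (x k) *v JTc k" and ?b = "cauchy_beta k"
  obtain betac where
    betac_min: "\<forall>beta. 0 \<le> beta \<and> beta \<le> kv * alpha k \<longrightarrow>
       (1/2) * (norm (?c - betac *\<^sub>R ?Ja))\<^sup>2 \<le> (1/2) * (norm (?c - beta *\<^sub>R ?Ja))\<^sup>2"
    and v_better: "norm (?c + J (x k) *v v k) \<le> norm (?c + J (x k) *v (- (betac *\<^sub>R JTc k)))"
    using v_cauchy[OF assms] by blast
  have c_inner: "?c \<bullet> ?Ja = (norm (JTc k))\<^sup>2"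
    by (simp add: JTc_def dot_lmul_matrix[symmetric] power2_norm_eq_inner)
  have "norm ?Ja \<le> kgc * norm (JTc k)"
    using norm_mult_vec_le_spec_norm mult_right_mono[OF J_bd[OF x_in_X] norm_ge_zero]
    by (blast intro: order_trans)
  then have "(norm ?Ja)\<^sup>2 \<le> (kgc * norm (JTc k))\<^sup>2"
    by (rule power_mono) simp
  then have "?b * (norm ?Ja)\<^sup>2 \<le> ?b * (kgc\<^sup>2 * (norm (JTc k))\<^sup>2)"
    using cauchy_beta_pos[of k] by (simp add: power_mult_distrib)
  also have "\<dots> \<le> (norm (JTc k))\<^sup>2"
    using mult_right_mono[OF cauchy_beta_mult_kgc_sq_le[of k], of "(norm (JTc k))\<^sup>2"]
    by (simp add: algebra_simps)
  finally have b_small: "?b * (norm ?Ja)\<^sup>2 \<le> ?c \<bullet> ?Ja"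
    unfolding c_inner .
  have "norm (?c + J (x k) *v v k) \<le> norm (?c - betac *\<^sub>R ?Ja)"
    using v_better by (simp add: linear_neg[OF matrix_vector_mul_linear] matrix_vector_mult_scaleR)
  also have "\<dots> \<le> norm (?c - ?b *\<^sub>R ?Ja)"
    using betac_min cauchy_beta_pos[of k] cauchy_beta_le[of k]
    by (intro power2_le_imp_le[OF _ norm_ge_zero]) auto
  finally have "(norm (?c + J (x k) *v v k))\<^sup>2 \<le> (norm (?c - ?b *\<^sub>R ?Ja))\<^sup>2"
    by (simp add: power_mono)
  also have "\<dots> \<le> (norm ?c)\<^sup>2 - ?b * (?c \<bullet> ?Ja)"
    using cauchy_beta_pos[of k] b_small by (intro norm_diff_scaleR_sq_le) auto
  finally show ?thesis
    unfolding c_inner .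
qed

lemma constr_decrease_ge:
  assumes "JTc k \<noteq> 0"
  shows "cauchy_beta k * (norm (JTc k))\<^sup>2 / (2 * norm (c (x k))) \<le> constr_decrease k"
  unfolding constr_decrease_def
  using assms JTc_eq_0_iff[of k] cauchy_beta_pos[of k]
  by (intro half_sq_decrease_le_diff norm_lin_constr_sq_le) auto

lemma constr_decrease_nonneg: "0 \<le> constr_decrease k"
proof (cases "JTc k = 0")
  case False
  then show ?thesis
    using constr_decrease_ge[of k] cauchy_beta_pos[of k]
    by (smt (verit) divide_nonneg_nonneg mult_nonneg_nonneg norm_ge_zero zero_le_power2)
qed (simp add: constr_decrease_def v_zero)

lemma constr_decrease_ge_sigmin: "cauchy_beta k * sigmin\<^sup>2 * norm (c (x k)) / 2 \<le> constr_decrease k"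
proof (cases "JTc k = 0")
  case False
  then have nc: "0 < norm (c (x k))" using JTc_eq_0_iff by simp
  have "cauchy_beta k * sigmin\<^sup>2 * norm (c (x k)) / 2
      = cauchy_beta k * (sigmin * norm (c (x k)))\<^sup>2 / (2 * norm (c (x k)))"
    using nc by (simp add: power2_eq_square field_simps)
  also have "\<dots> \<le> cauchy_beta k * (norm (JTc k))\<^sup>2 / (2 * norm (c (x k)))"
    using norm_JTc_ge[of k] sigmin_pos cauchy_beta_pos[of k] nc
    by (intro divide_right_mono mult_left_mono power_mono) auto
  also have "\<dots> \<le> constr_decrease k"
    using constr_decrease_ge[OF False] .
  finally show ?thesis .
qed (simp add: JTc_eq_0_iff constr_decrease_def v_zero)

section \<open>The merit parameter\<close>

definition K :: real where
  "K = 2 * kv * kgc * (kgf + kdr + sigbar * kc * kv * kgc)"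

definition taumintrial :: real where
  "taumintrial = min ((1 - sigc) * kv * sigmin\<^sup>2 / K) ((1 - sigc) * (sigmin / kgc)\<^sup>2 / (K * alpha 0))"

definition taumin :: real where
  "taumin = min (tau 0) ((1 - epstau) * taumintrial)"

lemma sigbar_pos: "0 < sigbar" and sigbar_le_1: "sigbar \<le> 1"
  using sigu by (auto simp: sigbar_def)

lemma K_pos: "0 < K"
  unfolding K_def using consts_pos kv_pos sigbar_pos by (auto intro!: mult_pos_pos add_pos_pos)

lemma taumintrial_pos: "0 < taumintrial"
  unfolding taumintrial_def using sigc K_pos kv_pos sigmin_pos consts_pos alpha0_pos by auto

lemma D_le: "D k \<le> (kgf + kdr) * norm (v k) + sigbar * (norm (v k))\<^sup>2 / alpha k"
proof -
  have "D k \<le> (g (x k) + gr k) \<bullet> step k + sigbar * (norm (step k))\<^sup>2 / alpha k"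
    unfolding D_def using r_step_le[of k] by (simp add: inner_add_left)
  also have "\<dots> = (g (x k) + gr k) \<bullet> v k + sigbar * (norm (v k))\<^sup>2 / alpha k
      - (1 - sigbar) * (norm (u k))\<^sup>2 / alpha k"
    using inner_g_gr_u[of k] norm_step_sq[of k]
    by (simp add: step_def inner_add_right add_divide_distrib diff_divide_distrib algebra_simps)
  also have "\<dots> \<le> (g (x k) + gr k) \<bullet> v k + sigbar * (norm (v k))\<^sup>2 / alpha k"
    using sigbar_le_1 alpha_pos[of k] by simp
  also have "(g (x k) + gr k) \<bullet> v k \<le> (kgf + kdr) * norm (v k)"
    using norm_cauchy_schwarz mult_right_mono[OF norm_g_gr_le norm_ge_zero] by (blast intro: order_trans)
  finally show ?thesis by simp
qed

lemma D_le_K: "D k \<le> alpha k * norm (JTc k) * K / (2 * kgc)"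
proof -
  define w where "w = kv * alpha k * norm (JTc k)"
  have w: "norm (v k) \<le> w" "0 \<le> w"
    using norm_v_le[of k] kv_pos alpha_pos[of k] by (auto simp: w_def)
  have "norm (JTc k) \<le> kgc * kc"
    using norm_JTc_le[of k] mult_left_mono[OF norm_c_le[of k] less_imp_le[OF consts_pos(3)]] by linarith
  then have "sigbar * kv * norm (JTc k) \<le> sigbar * kv * (kgc * kc)"
    using sigbar_pos kv_pos by (intro mult_left_mono) auto
  have "(kgf + kdr) * norm (v k) \<le> (kgf + kdr) * w"
    using w consts_pos by (intro mult_left_mono) auto
  moreover have "sigbar * (norm (v k))\<^sup>2 / alpha k \<le> sigbar * w\<^sup>2 / alpha k"
    using w sigbar_pos alpha_pos[of k] by (intro divide_right_mono mult_left_mono power_mono) auto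
  ultimately have "D k \<le> (kgf + kdr) * w + sigbar * w\<^sup>2 / alpha k"
    using D_le[of k] by linarith
  also have "\<dots> = w * (kgf + kdr + sigbar * kv * norm (JTc k))"
    using alpha_pos[of k] by (simp add: w_def power2_eq_square field_simps)
  also have "\<dots> \<le> w * (kgf + kdr + sigbar * kc * kv * kgc)"
    using \<open>sigbar * kv * norm (JTc k) \<le> _\<close> w by (intro mult_left_mono) (auto simp: algebra_simps)
  also have "\<dots> = alpha k * norm (JTc k) * K / (2 * kgc)"
    using consts_pos by (simp add: w_def K_def field_simps)
  finally show ?thesis .
qed

lemma taumintrial_le_cauchy_ratio:
  "taumintrial \<le> (1 - sigc) * cauchy_beta k * sigmin * kgc / (alpha k * K)"
proof (cases "kv * alpha k \<le> 1 / kgc\<^sup>2")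
  case True
  have "(1 - sigc) * kv * sigmin\<^sup>2 / K \<le> (1 - sigc) * kv * sigmin * kgc / K"
    using sigmin_le_kgc sigc kv_pos sigmin_pos K_pos
    by (intro divide_right_mono mult_left_mono) (auto simp: power2_eq_square)
  also have "\<dots> = (1 - sigc) * cauchy_beta k * sigmin * kgc / (alpha k * K)"
    using True alpha_pos[of k] by (simp add: cauchy_beta_def)
  finally show ?thesis unfolding taumintrial_def by simp
next
  case False
  have "(1 - sigc) * (sigmin / kgc)\<^sup>2 / (K * alpha 0) \<le> (1 - sigc) * (sigmin / kgc) / (alpha k * K)"
  proof (intro frac_le mult_left_mono)
    have q: "0 \<le> sigmin / kgc" "sigmin / kgc \<le> 1"
      using sigmin_le_kgc sigmin_pos consts_pos by auto
    then show "(sigmin / kgc)\<^sup>2 \<le> sigmin / kgc"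
      by (simp only: power2_eq_square) (rule mult_left_le_one_le[OF q(1) q(1) q(2)])
    show "alpha k * K \<le> K * alpha 0" using alpha_le_alpha0[of k] K_pos by (simp add: mult.commute)
  qed (use sigc sigmin_pos consts_pos alpha_pos[of k] K_pos in auto)
  also have "\<dots> = (1 - sigc) * cauchy_beta k * sigmin * kgc / (alpha k * K)"
    using False consts_pos by (simp add: cauchy_beta_def power2_eq_square)
  finally show ?thesis unfolding taumintrial_def by simp
qed

lemma taumintrial_le_trial:
  assumes "0 < D k"
  shows "taumintrial \<le> (1 - sigc) * constr_decrease k / D k"
proof -
  have JTc: "JTc k \<noteq> 0"
    using assms D_le[of k] v_zero[of k] by auto
  then have nc: "0 < norm (c (x k))" using JTc_eq_0_iff by simp
  define Q where "Q = (1 - sigc) * cauchy_beta k * sigmin * kgc / (alpha k * K)"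
  have "Q * D k \<le> Q * (alpha k * norm (JTc k) * K / (2 * kgc))"
    using D_le_K[of k] sigc cauchy_beta_pos[of k] sigmin_pos consts_pos alpha_pos[of k] K_pos
    by (intro mult_left_mono) (auto simp: Q_def)
  also have "\<dots> = (1 - sigc) * (cauchy_beta k * norm (JTc k) / (2 * norm (c (x k)))) * (sigmin * norm (c (x k)))"
    using alpha_pos[of k] K_pos consts_pos nc by (simp add: Q_def field_simps)
  also have "\<dots> \<le> (1 - sigc) * (cauchy_beta k * norm (JTc k) / (2 * norm (c (x k)))) * norm (JTc k)"
    using norm_JTc_ge[of k] sigc cauchy_beta_pos[of k] nc by (intro mult_left_mono) auto
  also have "\<dots> = (1 - sigc) * (cauchy_beta k * (norm (JTc k))\<^sup>2 / (2 * norm (c (x k))))"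
    by (simp add: power2_eq_square)
  also have "\<dots> \<le> (1 - sigc) * constr_decrease k"
    using constr_decrease_ge[OF JTc] sigc by (intro mult_left_mono) auto
  finally have "Q \<le> (1 - sigc) * constr_decrease k / D k"
    using assms by (simp add: pos_le_divide_eq)
  then show ?thesis
    using taumintrial_le_cauchy_ratio[of k] unfolding Q_def by linarith
qed

lemma tau_ge_min_prev: "min (tau_prev k) ((1 - epstau) * taumintrial) \<le> tau k"
proof -
  have "(1 - epstau) * taumintrial \<le> (1 - sigc) * constr_decrease k / D k" if "0 < D k"
    using taumintrial_le_trial[OF that] taumintrial_pos epstau
    by (smt (verit) mult_left_le_one_le)
  moreover have "(1 - epstau) * taumintrial \<le> (1 - epstau) * tau_prev k"
    if "0 < D k" "tau_prev k > (1 - sigc) * constr_decrease k / D k"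
    using taumintrial_le_trial[OF that(1)] that(2) epstau by (intro mult_left_mono) auto
  ultimately show ?thesis
    using tau_upd[of k] by auto
qed

lemma tau_le_prev: "0 < tau_prev k \<Longrightarrow> tau k \<le> tau_prev k"
  using tau_upd[of k] epstau by (auto simp: min_def)

lemma tau_le_trial: "0 < D k \<Longrightarrow> tau k \<le> (1 - sigc) * constr_decrease k / D k"
  using tau_upd[of k] by (auto simp: min_def)

lemma taumin_le_tau: "taumin \<le> tau k"
proof (induction k)
  case (Suc k)
  then show ?case
    using tau_ge_min_prev[of "Suc k"] unfolding taumin_def tau_prev_def by (simp add: min_def split: if_splits)
qed (simp add: taumin_def)

lemma taumin_pos: "0 < taumin"
proof -
  have "0 < (1 - epstau) * taumintrial"
    using epstau taumintrial_pos by simp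
  then have "0 < tau 0"
    using tau_ge_min_prev[of 0] taum1_pos by (auto simp: tau_prev_def min_le_iff_disj)
  then show ?thesis unfolding taumin_def using epstau taumintrial_pos by simp
qed

lemma tau_pos: "0 < tau k"
  using taumin_le_tau[of k] taumin_pos by linarith

lemma tau_Suc_le: "tau (Suc k) \<le> tau k"
  using tau_le_prev[of "Suc k"] tau_pos[of k] by (simp add: tau_prev_def)

lemma tau_mult_D_le: "tau k * D k \<le> (1 - sigc) * constr_decrease k"
proof (cases "D k \<le> 0")
  case True
  have "tau k * D k \<le> 0"
    using True tau_pos[of k] by (simp add: mult_nonneg_nonpos)
  moreover have "0 \<le> (1 - sigc) * constr_decrease k"
    using constr_decrease_nonneg[of k] sigc by simp
  ultimately show ?thesis by linarith
next
  case False
  then have "tau k * D k \<le> (1 - sigc) * constr_decrease k / D k * D k"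
    by (intro mult_right_mono tau_le_trial) auto
  also have "\<dots> = (1 - sigc) * constr_decrease k"
    using False by simp
  finally show ?thesis .
qed

section \<open>Successful iterations\<close>

lemma model_decrease_ge:
  "tau k * sigu * (norm (step k))\<^sup>2 / alpha k + sigc * constr_decrease k
     \<le> model_decrease k (step k) (tau k)"
proof -
  let ?Q = "(norm (step k))\<^sup>2"
  have "g (x k) \<bullet> step k + 1 / (2 * alpha k) * ?Q + r (x k + step k) - r (x k) = D k - sigu * ?Q / alpha k"
    using alpha_pos[of k] unfolding D_def sigbar_def by (simp add: field_simps)
  then have "model_decrease k (step k) (tau k) = - tau k * (D k - sigu * ?Q / alpha k) + constr_decrease k"
    by (simp add: model_decrease_def constr_decrease_def J_mult_step)
  then show ?thesis
    using tau_mult_D_le[of k] by (simp add: algebra_simps)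
qed

lemma model_decrease_nonneg: "0 \<le> model_decrease k (step k) (tau k)"
proof -
  have "0 \<le> tau k * sigu * (norm (step k))\<^sup>2 / alpha k"
    using tau_pos[of k] sigu alpha_pos[of k] by simp
  moreover have "0 \<le> sigc * constr_decrease k"
    using sigc constr_decrease_nonneg[of k] by simp
  ultimately show ?thesis
    using model_decrease_ge[of k] by linarith
qed

definition alpha_succ :: real where
  "alpha_succ = taumin / (taumin * Lg + LJ)"

lemma alpha_succ_denom_pos: "0 < taumin * Lg + LJ"
  using taumin_pos consts_pos by (simp add: add_pos_pos)

lemma alpha_succ_pos: "0 < alpha_succ"
  unfolding alpha_succ_def using taumin_pos alpha_succ_denom_pos by simp

lemma alpha_mult_le_tau:
  assumes "alpha k \<le> alpha_succ"
  shows "alpha k * (tau k * Lg + LJ) \<le> tau k"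
proof -
  have le: "alpha k * (taumin * Lg + LJ) \<le> taumin"
    using assms alpha_succ_denom_pos by (simp add: alpha_succ_def pos_le_divide_eq)
  then have sum_le: "taumin * (alpha k * Lg) + alpha k * LJ \<le> taumin"
    by (simp add: algebra_simps)
  moreover have "0 \<le> alpha k * LJ"
    using alpha_pos[of k] consts_pos by simp
  ultimately have "taumin * (alpha k * Lg) \<le> taumin * 1"
    by linarith
  then have "alpha k * Lg \<le> 1"
    by (simp only: mult_le_cancel_left_pos[OF taumin_pos])
  then have "taumin * (1 - alpha k * Lg) \<le> tau k * (1 - alpha k * Lg)"
    by (intro mult_right_mono taumin_le_tau) simp
  then have "alpha k * LJ \<le> tau k * (1 - alpha k * Lg)"
    using sum_le by (simp add: algebra_simps)
  then show ?thesis
    by (simp add: algebra_simps)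
qed

lemma successful_if_alpha_le:
  assumes "alpha k \<le> alpha_succ"
  shows "k \<in> successful"
proof -
  let ?s = "step k"
  have f_up: "f (x k + ?s) \<le> f (x k) + g (x k) \<bullet> ?s + Lg / 2 * (norm ?s)\<^sup>2"
    using lipschitz_gradient_upper_bound[OF f_deriv X_convex x_in_X trial_in_X g_lip] consts_pos by simp
  have "norm (c (x k + ?s) - c (x k) - J (x k) *v ?s) \<le> LJ / 2 * (norm ?s)\<^sup>2"
    using lipschitz_jacobian_linearization_error[OF c_deriv X_convex x_in_X trial_in_X J_lip] consts_pos
    by simp
  then have c_up: "norm (c (x k + ?s)) \<le> norm (c (x k) + J (x k) *v ?s) + LJ / 2 * (norm ?s)\<^sup>2"
    using norm_triangle_ineq[of "c (x k) + J (x k) *v ?s" "c (x k + ?s) - c (x k) - J (x k) *v ?s"]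
    by simp
  have "(tau k * Lg + LJ) / 2 \<le> tau k / (2 * alpha k)"
    using alpha_mult_le_tau[OF assms] alpha_pos[of k] by (simp add: field_simps)
  then have quad: "(tau k * Lg + LJ) / 2 * (norm ?s)\<^sup>2 \<le> tau k / (2 * alpha k) * (norm ?s)\<^sup>2"
    by (rule mult_right_mono) simp
  have "merit f r c (tau k) (x k + ?s) = tau k * f (x k + ?s) + tau k * r (x k + ?s) + norm (c (x k + ?s))"
    by (simp add: merit_def algebra_simps)
  also have "\<dots> \<le> tau k * (f (x k) + g (x k) \<bullet> ?s + Lg / 2 * (norm ?s)\<^sup>2) + tau k * r (x k + ?s)
      + norm (c (x k) + J (x k) *v ?s) + LJ / 2 * (norm ?s)\<^sup>2"
    using mult_left_mono[OF f_up less_imp_le[OF tau_pos[of k]]] c_up by linarith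
  also have "\<dots> = merit f r c (tau k) (x k) - model_decrease k ?s (tau k)
      + ((tau k * Lg + LJ) / 2 * (norm ?s)\<^sup>2 - tau k / (2 * alpha k) * (norm ?s)\<^sup>2)"
    by (simp add: merit_def model_decrease_def algebra_simps)
  also have "\<dots> \<le> merit f r c (tau k) (x k) - model_decrease k ?s (tau k)"
    using quad by simp
  also have "\<dots> \<le> merit f r c (tau k) (x k) - eta * model_decrease k ?s (tau k)"
    using model_decrease_nonneg[of k] eta by (simp add: mult_left_le_one_le)
  finally show ?thesis
    by (simp add: successful_def)
qed

definition alphamin :: real where
  "alphamin = min (alpha 0) (xi * taumin / (taumin * Lg + LJ))"

lemma alphamin_eq: "alphamin = min (alpha 0) (xi * alpha_succ)"
  by (simp add: alphamin_def alpha_succ_def)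

lemma alphamin_pos: "0 < alphamin"
  using alpha0_pos xi alpha_succ_pos by (simp add: alphamin_eq)

lemma alphamin_le_alpha: "alphamin \<le> alpha k"
proof (induction k)
  case (Suc k)
  show ?case
  proof (cases "k \<in> successful")
    case True
    then show ?thesis using succ[of k] Suc by simp
  next
    case False
    then have "alpha_succ < alpha k"
      using successful_if_alpha_le by force
    then have "xi * alpha_succ \<le> xi * alpha k"
      using xi by simp
    then show ?thesis
      using unsucc[OF False] by (simp add: alphamin_eq)
  qed
qed (simp add: alphamin_def)

definition chi :: "nat \<Rightarrow> real" where
  "chi k = max (norm (g (x k) + gr k - transpose (J (x k)) *v y k)) (norm (c (x k)))"

lemma chi_eq: "chi k = max (norm (u k) / alpha k) (norm (c (x k)))"
proof -
  have "g (x k) + gr k - transpose (J (x k)) *v y k = - ((1 / alpha k) *\<^sub>R u k)"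
    using kkt[of k] by (simp add: algebra_simps eq_neg_iff_add_eq_0)
  then show ?thesis
    unfolding chi_def using alpha_pos[of k] by simp
qed

definition kPhi :: real where
  "kPhi = eta * min (sigu * taumin * alphamin)
     (min (sigc * sigmin\<^sup>2 / (2 * kc * (1 + kgc\<^sup>2))) (sigc * sigmin\<^sup>2 * kv * alphamin / (2 * kc)))"

lemma kPhi_pos: "0 < kPhi"
  unfolding kPhi_def using eta sigu taumin_pos alphamin_pos sigc sigmin_pos consts_pos kv_pos
  by (simp add: add_pos_nonneg)

lemma prox_term_le:
  "sigu * taumin * alphamin * (norm (u k) / alpha k)\<^sup>2 \<le> tau k * sigu * (norm (step k))\<^sup>2 / alpha k"
proof -
  have "sigu * taumin * alphamin * (norm (u k) / alpha k)\<^sup>2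
      = (sigu * (taumin * (norm (u k))\<^sup>2) / alpha k) * (alphamin / alpha k)"
    using alpha_pos[of k] by (simp add: field_simps power2_eq_square)
  also have "\<dots> \<le> sigu * (taumin * (norm (u k))\<^sup>2) / alpha k"
    using alphamin_le_alpha[of k] alpha_pos[of k] alphamin_pos sigu taumin_pos
    by (intro mult_right_le_one_le) simp_all
  also have "\<dots> \<le> sigu * (tau k * (norm (step k))\<^sup>2) / alpha k"
    using norm_step_sq[of k] taumin_le_tau[of k] sigu taumin_pos alpha_pos[of k]
    by (intro divide_right_mono mult_left_mono mult_mono) auto
  also have "\<dots> = tau k * sigu * (norm (step k))\<^sup>2 / alpha k"
    by (simp add: ac_simps)
  finally show ?thesis .
qed

lemma constr_term_le:
  "min (sigc * sigmin\<^sup>2 / (2 * kc * (1 + kgc\<^sup>2))) (sigc * sigmin\<^sup>2 * kv * alphamin / (2 * kc))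
     * (norm (c (x k)))\<^sup>2 \<le> sigc * constr_decrease k"
    (is "min ?m2 ?m3 * _ \<le> _")
proof -
  define nc where "nc = norm (c (x k))"
  have nc: "0 \<le> nc" "nc \<le> kc"
    using norm_c_le[of k] by (auto simp: nc_def)
  have "min ?m2 ?m3 * nc\<^sup>2 \<le> sigc * (cauchy_beta k * sigmin\<^sup>2 * nc / 2)"
  proof (cases "kv * alpha k \<le> 1 / kgc\<^sup>2")
    case True
    have "?m3 * nc\<^sup>2 = (sigc * sigmin\<^sup>2 * kv * nc / 2) * (alphamin * (nc / kc))"
      using consts_pos by (simp add: field_simps power2_eq_square)
    also have "\<dots> \<le> (sigc * sigmin\<^sup>2 * kv * nc / 2) * (alpha k * 1)"
      using alphamin_le_alpha[of k] alphamin_pos nc consts_pos sigc kv_pos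
      by (intro mult_left_mono mult_mono) auto
    also have "\<dots> = sigc * (cauchy_beta k * sigmin\<^sup>2 * nc / 2)"
      using True by (simp add: cauchy_beta_def)
    finally show ?thesis
      by (meson min.cobounded2 mult_right_mono order_trans zero_le_power2)
  next
    case False
    have "?m2 * nc\<^sup>2 = (sigc * sigmin\<^sup>2 * nc / 2) * ((nc / kc) * (1 / (1 + kgc\<^sup>2)))"
      using consts_pos by (simp add: field_simps power2_eq_square)
    also have "\<dots> \<le> (sigc * sigmin\<^sup>2 * nc / 2) * (1 * (1 / kgc\<^sup>2))"
      using nc consts_pos sigc
      by (intro mult_left_mono mult_mono divide_left_mono) (auto simp: add_pos_nonneg)
    also have "\<dots> = sigc * (cauchy_beta k * sigmin\<^sup>2 * nc / 2)"
      using False by (simp add: cauchy_beta_def)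
    finally show ?thesis
      by (meson min.cobounded1 mult_right_mono order_trans zero_le_power2)
  qed
  also have "\<dots> \<le> sigc * constr_decrease k"
    using constr_decrease_ge_sigmin[of k] sigc unfolding nc_def by (intro mult_left_mono) auto
  finally show ?thesis unfolding nc_def .
qed

lemma model_decrease_ge_chi: "kPhi * (chi k)\<^sup>2 \<le> eta * model_decrease k (step k) (tau k)"
proof -
  define a where "a = norm (u k) / alpha k"
  define nc where "nc = norm (c (x k))"
  define m where "m = min (sigu * taumin * alphamin)
     (min (sigc * sigmin\<^sup>2 / (2 * kc * (1 + kgc\<^sup>2))) (sigc * sigmin\<^sup>2 * kv * alphamin / (2 * kc)))"
  have "0 < m"
    using kPhi_pos eta by (simp add: kPhi_def m_def zero_less_mult_iff)
  have "(chi k)\<^sup>2 \<le> a\<^sup>2 + nc\<^sup>2"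
    using alpha_pos[of k] unfolding chi_eq a_def nc_def by (simp add: max_def)
  then have "m * (chi k)\<^sup>2 \<le> m * a\<^sup>2 + m * nc\<^sup>2"
    using \<open>0 < m\<close> by (simp add: mult_left_mono flip: distrib_left)
  also have "\<dots> \<le> sigu * taumin * alphamin * a\<^sup>2
      + min (sigc * sigmin\<^sup>2 / (2 * kc * (1 + kgc\<^sup>2))) (sigc * sigmin\<^sup>2 * kv * alphamin / (2 * kc)) * nc\<^sup>2"
    unfolding m_def by (intro add_mono mult_right_mono) auto
  also have "\<dots> \<le> model_decrease k (step k) (tau k)"
    using prox_term_le[of k] constr_term_le[of k] model_decrease_ge[of k]
    unfolding a_def nc_def by linarith
  finally show ?thesis
    using eta by (simp add: kPhi_def m_def mult.assoc mult_left_mono)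
qed

section \<open>Merit decrease and complexity\<close>

definition shifted_merit :: "nat \<Rightarrow> real" where
  "shifted_merit k = tau k * (f (x k) - finf + r (x k)) + norm (c (x k))"

lemma shifted_merit_nonneg: "0 \<le> shifted_merit k"
  using f_lb[OF x_in_X, of k] r_nonneg[of "x k"] tau_pos[of k] by (simp add: shifted_merit_def)

lemma shifted_merit_Suc_le:
  "shifted_merit (Suc k)
     \<le> shifted_merit k - (if k \<in> successful then eta * model_decrease k (step k) (tau k) else 0)"
proof (cases "k \<in> successful")
  case True
  have "0 \<le> f (x k + step k) - finf + r (x k + step k)"
    using f_lb[OF trial_in_X, of k] r_nonneg[of "x k + step k"] by simp
  then have "shifted_merit (Suc k) \<le> tau k * (f (x k + step k) - finf + r (x k + step k))
      + norm (c (x k + step k))"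
    using succ[OF True] tau_Suc_le[of k] by (simp add: shifted_merit_def mult_right_mono)
  also have "\<dots> = merit f r c (tau k) (x k + step k) - tau k * finf"
    by (simp add: merit_def algebra_simps)
  also have "\<dots> \<le> merit f r c (tau k) (x k) - eta * model_decrease k (step k) (tau k) - tau k * finf"
    using True by (simp add: successful_def)
  also have "\<dots> = shifted_merit k - eta * model_decrease k (step k) (tau k)"
    by (simp add: merit_def shifted_merit_def algebra_simps)
  finally show ?thesis using True by simp
next
  case False
  have "0 \<le> f (x k) - finf + r (x k)"
    using f_lb[OF x_in_X, of k] r_nonneg[of "x k"] by simp
  then show ?thesis
    using unsucc[OF False] tau_Suc_le[of k] False by (simp add: shifted_merit_def mult_right_mono)
qed

lemma shifted_merit_antimono: "k \<le> k' \<Longrightarrow> shifted_merit k' \<le> shifted_merit k"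
proof (induction k' rule: dec_induct)
  case (step k')
  have "0 \<le> eta * model_decrease k' (step k') (tau k')"
    using eta model_decrease_nonneg[of k'] by simp
  then show ?case
    using step.IH shifted_merit_Suc_le[of k'] by (smt (verit))
qed simp

lemma shifted_merit_decrease:
  assumes "k1 \<le> k2" "0 \<le> eps" "\<And>k. k1 \<le> k \<Longrightarrow> k < k2 \<Longrightarrow> eps < chi k"
  shows "shifted_merit k2 + card ({k1..<k2} \<inter> successful) * (kPhi * eps\<^sup>2) \<le> shifted_merit k1"
  using assms
proof (induction k2 rule: dec_induct)
  case (step k)
  have "eps < chi k"
    using step.prems step.hyps by simp
  then have "kPhi * eps\<^sup>2 \<le> kPhi * (chi k)\<^sup>2"
    using step.prems kPhi_pos by (intro mult_left_mono power_mono) auto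
  also have "\<dots> \<le> eta * model_decrease k (step k) (tau k)"
    by (rule model_decrease_ge_chi)
  finally have "shifted_merit (Suc k) + (if k \<in> successful then kPhi * eps\<^sup>2 else 0) \<le> shifted_merit k"
    using shifted_merit_Suc_le[of k] by (auto split: if_splits)
  moreover have "{k1..<Suc k} \<inter> successful
      = (if k \<in> successful then insert k ({k1..<k} \<inter> successful) else {k1..<k} \<inter> successful)"
    using step.hyps by (auto simp: less_Suc_eq)
  ultimately show ?case
    using step.IH step.prems by (cases "k \<in> successful") (simp_all add: algebra_simps)
qed simp

lemma alpha_eq_pow: "alpha k = alpha 0 * xi ^ card ({..<k} - successful)"
proof (induction k)
  case (Suc k)
  then show ?case
    using succ[of k] unsucc[of k] by (simp add: lessThan_Suc_diff)
qed simp

definition max_unsuccessful :: int where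
  "max_unsuccessful = max 0 \<lceil>ln (taumin / (alpha 0 * (taumin * Lg + LJ))) / ln xi\<rceil>"

lemma card_unsuccessful_le: "int (card ({..<k} - successful)) \<le> max_unsuccessful"
proof (induction k)
  case (Suc k)
  show ?case
  proof (cases "k \<in> successful")
    case True
    then show ?thesis using Suc by (simp add: lessThan_Suc_diff)
  next
    case False
    let ?F = "card ({..<k} - successful)"
    have "alpha_succ < alpha 0 * xi ^ ?F"
      using False successful_if_alpha_le[of k] alpha_eq_pow[of k] by force
    then have "alpha_succ / alpha 0 < xi ^ ?F"
      using alpha0_pos by (simp add: pos_divide_less_eq mult.commute)
    then have "ln (alpha_succ / alpha 0) < ?F * ln xi"
      using alpha_succ_pos alpha0_pos xi by (simp add: ln_less_cancel_iff ln_realpow[symmetric])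
    then have "?F < ln (alpha_succ / alpha 0) / ln xi"
      using xi by (simp add: neg_less_divide_eq)
    also have "alpha_succ / alpha 0 = taumin / (alpha 0 * (taumin * Lg + LJ))"
      by (simp add: alpha_succ_def)
    finally have "int ?F < \<lceil>ln (taumin / (alpha 0 * (taumin * Lg + LJ))) / ln xi\<rceil>"
      by (simp add: less_ceiling_iff)
    then show ?thesis
      using False by (simp add: max_unsuccessful_def lessThan_Suc_diff)
  qed
qed (simp add: max_unsuccessful_def)

lemma norm_c_le_shifted_merit: "norm (c (x k)) \<le> shifted_merit k"
  using f_lb[OF x_in_X, of k] r_nonneg[of "x k"] tau_pos[of k] by (simp add: shifted_merit_def)

lemma norm_c_le_if_shifted_merit_small:
  assumes "0 < eps" "shifted_merit k < kPhi * eps\<^sup>2"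
  shows "norm (c (x k)) \<le> eps"
proof (rule ccontr)
  define m where "m = sigc * sigmin\<^sup>2 / (2 * kc * (1 + kgc\<^sup>2))"
  assume "\<not> norm (c (x k)) \<le> eps"
  then have "eps < norm (c (x k))" by simp
  then have "eps \<le> kc" using norm_c_le[of k] by simp
  have "sigmin\<^sup>2 \<le> 1 + kgc\<^sup>2"
    using power_mono[OF sigmin_le_kgc, of 2] sigmin_pos by simp
  then have "sigc * sigmin\<^sup>2 \<le> 1 * (1 + kgc\<^sup>2)"
    using sigc by (intro mult_mono) auto
  have pos: "0 < 1 + kgc\<^sup>2" by (simp add: add_pos_nonneg)
  have "m * kc = sigc * sigmin\<^sup>2 / (2 * (1 + kgc\<^sup>2))"
    using consts_pos by (simp add: m_def)
  also have "\<dots> \<le> (1 + kgc\<^sup>2) / (2 * (1 + kgc\<^sup>2))"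
    using \<open>sigc * sigmin\<^sup>2 \<le> 1 * (1 + kgc\<^sup>2)\<close> pos by (intro divide_right_mono) auto
  also have "\<dots> = 1 / 2"
    using pos by simp
  finally have m_kc: "m * kc \<le> 1 / 2" .
  have "0 < m" using sigc sigmin_pos consts_pos by (simp add: m_def add_pos_nonneg)
  have "norm (c (x k)) < kPhi * eps\<^sup>2"
    using norm_c_le_shifted_merit[of k] assms(2) by linarith
  also have "\<dots> \<le> m * eps\<^sup>2"
  proof (rule mult_right_mono)
    have "kPhi \<le> eta * m"
      unfolding kPhi_def m_def using eta by (intro mult_left_mono) auto
    also have "\<dots> \<le> m"
      using eta \<open>0 < m\<close> by simp
    finally show "kPhi \<le> m" .
  qed simp
  also have "\<dots> \<le> (m * kc) * eps"
    using \<open>eps \<le> kc\<close> \<open>0 < m\<close> assms(1) by (simp add: power2_eq_square)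
  also have "\<dots> \<le> eps / 2"
    using mult_right_mono[OF m_kc, of eps] assms(1) by simp
  finally show False
    using \<open>eps < norm (c (x k))\<close> assms(1) by linarith
qed

lemma prox_residual_le: "norm (u k) / alpha k \<le> kgf + kdr"
proof (cases "u k = 0")
  case False
  have "(norm (u k))\<^sup>2 / alpha k \<le> norm (g (x k) + gr k) * norm (u k)"
    using inner_g_gr_u[of k] Cauchy_Schwarz_ineq2[of "g (x k) + gr k" "u k"] alpha_pos[of k] by simp
  also have "\<dots> \<le> (kgf + kdr) * norm (u k)"
    using norm_g_gr_le[of k] by (rule mult_right_mono) simp
  finally have "norm (u k) * (norm (u k) / alpha k) \<le> norm (u k) * (kgf + kdr)"
    by (simp add: power2_eq_square algebra_simps)
  then show ?thesis
    using False by (subst (asm) mult_le_cancel_left_pos) auto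
qed (use consts_pos in simp)

lemma inner_g_step_le:
  "g (x k) \<bullet> step k \<le> (kgf + kdr) * norm (v k) - (norm (u k))\<^sup>2 / alpha k + r (x k) - r (x k + step k)"
proof -
  have "(g (x k) + gr k) \<bullet> v k \<le> (kgf + kdr) * norm (v k)"
    using norm_cauchy_schwarz mult_right_mono[OF norm_g_gr_le norm_ge_zero] by (blast intro: order_trans)
  then show ?thesis
    using inner_g_gr_u[of k] r_step_le[of k] by (simp add: step_def inner_add_left inner_add_right)
qed

lemma f_descent_along_step:
  assumes "0 \<le> t" "t \<le> 1"
  shows "finf \<le> f (x k) + t * (g (x k) \<bullet> step k) + Lg / 2 * t\<^sup>2 * (norm (step k))\<^sup>2"
proof -
  have X: "x k + t *\<^sub>R step k \<in> X"
    by (rule convex_segment_point[OF X_convex x_in_X trial_in_X assms])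
  have "finf \<le> f (x k + t *\<^sub>R step k)"
    using f_lb[OF X] .
  also have "\<dots> \<le> f (x k) + g (x k) \<bullet> (t *\<^sub>R step k) + Lg / 2 * (norm (t *\<^sub>R step k))\<^sup>2"
    using lipschitz_gradient_upper_bound[OF f_deriv X_convex x_in_X X g_lip] consts_pos by simp
  finally show ?thesis
    using assms by (simp add: power_mult_distrib)
qed

lemma taumin_le_inverse: "taumin \<le> 1 / (K * alpha 0)"
proof -
  have "taumin \<le> taumintrial"
    unfolding taumin_def using epstau taumintrial_pos by (smt (verit) mult_left_le_one_le)
  also have "\<dots> \<le> (1 - sigc) * (sigmin / kgc)\<^sup>2 / (K * alpha 0)"
    unfolding taumintrial_def by simp
  also have "\<dots> \<le> 1 / (K * alpha 0)"
  proof (intro divide_right_mono)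
    have "(sigmin / kgc)\<^sup>2 \<le> 1"
      using sigmin_le_kgc sigmin_pos consts_pos by (simp add: power_le_one)
    then show "(1 - sigc) * (sigmin / kgc)\<^sup>2 \<le> 1"
      using sigc by (smt (verit) mult_le_one zero_le_power2)
  qed (use K_pos alpha0_pos in simp)
  finally show ?thesis .
qed

lemma taumin_mult_v_le: "taumin * ((kgf + kdr) * norm (v k)) \<le> norm (c (x k)) / 2"
proof -
  have "norm (v k) \<le> kv * alpha k * (kgc * norm (c (x k)))"
    using norm_v_le[of k] mult_left_mono[OF norm_JTc_le[of k], of "kv * alpha k"] kv_pos alpha_pos[of k]
    by (simp add: order_trans)
  then have v: "norm (v k) \<le> kv * alpha k * kgc * norm (c (x k))"
    by (simp add: mult.assoc)
  have "2 * kv * kgc * (kgf + kdr) \<le> K"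
    unfolding K_def using kv_pos consts_pos sigbar_pos by simp
  have "1 / (K * alpha 0) \<le> 1 / (K * alpha k)"
    using alpha_le_alpha0[of k] alpha_pos[of k] K_pos by (intro divide_left_mono mult_left_mono) auto
  then have "taumin * ((kgf + kdr) * norm (v k)) \<le> 1 / (K * alpha k) * ((kgf + kdr) * (kv * alpha k * kgc * norm (c (x k))))"
    using taumin_le_inverse taumin_pos v consts_pos K_pos alpha_pos[of k]
    by (intro mult_mono mult_left_mono) auto
  also have "\<dots> = (2 * kv * kgc * (kgf + kdr)) * norm (c (x k)) / (2 * K)"
    using alpha_pos[of k] K_pos by (simp add: field_simps)
  also have "\<dots> \<le> K * norm (c (x k)) / (2 * K)"
    using \<open>2 * kv * kgc * (kgf + kdr) \<le> K\<close> K_pos by (intro divide_right_mono mult_right_mono) auto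
  also have "\<dots> = norm (c (x k)) / 2"
    using K_pos by simp
  finally show ?thesis .
qed

lemma alphamin_mult_Lg_lt_1: "alphamin * Lg < 1"
proof -
  have "alphamin * Lg \<le> xi * (alpha_succ * Lg)"
    using consts_pos by (simp add: alphamin_eq mult.assoc mult_right_mono)
  also have "\<dots> < 1 * 1"
  proof (intro mult_strict_mono')
    show "alpha_succ * Lg < 1"
      using alpha_succ_denom_pos consts_pos by (simp add: alpha_succ_def divide_less_eq)
  qed (use xi alpha_succ_pos consts_pos in auto)
  finally show ?thesis by simp
qed

lemma quadratic_step_bound:
  assumes "0 \<le> t" "t \<le> 1" "Lg * norm (v k) \<le> 2 * (kgf + kdr)"
  shows "0 \<le> f (x k) - finf + r (x k) + 2 * ((kgf + kdr) * norm (v k))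
           + (Lg / 2 * (t * alpha k)\<^sup>2 - t * alpha k) * (norm (u k) / alpha k)\<^sup>2"
proof -
  let ?W = "kgf + kdr" and ?V = "norm (v k)" and ?a = "norm (u k) / alpha k"
  have u_sq: "(norm (u k))\<^sup>2 / alpha k = alpha k * ?a\<^sup>2"
    using alpha_pos[of k] by (simp add: power2_eq_square field_simps)
  have s_sq: "Lg / 2 * t\<^sup>2 * (norm (step k))\<^sup>2 = Lg / 2 * t\<^sup>2 * ?V\<^sup>2 + Lg / 2 * (t * alpha k)\<^sup>2 * ?a\<^sup>2"
    using norm_step_sq[of k] alpha_pos[of k] by (simp add: power2_eq_square field_simps)
  have "t * (g (x k) \<bullet> step k) \<le> t * (?W * ?V + r (x k) - r (x k + step k)) - t * alpha k * ?a\<^sup>2"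
    using mult_left_mono[OF inner_g_step_le[of k] assms(1)] u_sq by (simp add: algebra_simps)
  moreover have "t * (?W * ?V + r (x k) - r (x k + step k)) \<le> ?W * ?V + r (x k)"
  proof -
    have "t * (?W * ?V + r (x k)) \<le> ?W * ?V + r (x k)"
      using assms(1,2) r_nonneg[of "x k"] consts_pos by (intro mult_left_le_one_le) auto
    moreover have "0 \<le> t * r (x k + step k)"
      using assms(1) r_nonneg[of "x k + step k"] by simp
    ultimately show ?thesis
      by (simp add: right_diff_distrib)
  qed
  moreover have "Lg / 2 * t\<^sup>2 * ?V\<^sup>2 \<le> ?W * ?V"
  proof -
    have "t\<^sup>2 \<le> 1"
      using assms(1,2) by (simp add: power_le_one)
    then have "Lg / 2 * t\<^sup>2 * ?V\<^sup>2 \<le> Lg / 2 * 1 * ?V\<^sup>2"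
      using consts_pos by (intro mult_right_mono mult_left_mono) auto
    also have "\<dots> = ?V * (Lg * ?V) / 2"
      by (simp add: power2_eq_square)
    also have "\<dots> \<le> ?V * (2 * ?W) / 2"
      using mult_left_mono[OF assms(3) norm_ge_zero[of "v k"]] by simp
    finally show ?thesis by (simp add: algebra_simps)
  qed
  ultimately show ?thesis
    using f_descent_along_step[OF assms(1,2), of k] s_sq
    unfolding left_diff_distrib by linarith
qed

lemma gap_le_if_shifted_merit_small:
  assumes "shifted_merit k < kPhi * eps\<^sup>2"
  shows "f (x k) - finf + r (x k) + 2 * ((kgf + kdr) * norm (v k)) < alphamin * eps\<^sup>2 / 2"
proof -
  define A where "A = f (x k) - finf + r (x k)"
  have A_nonneg: "0 \<le> A"
    using f_lb[OF x_in_X, of k] r_nonneg[of "x k"] by (simp add: A_def)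
  have "kPhi \<le> eta * (sigu * taumin * alphamin)"
    unfolding kPhi_def using eta by (intro mult_left_mono) auto
  also have "\<dots> \<le> 1 * (1 / 2 * taumin * alphamin)"
    using eta sigu taumin_pos alphamin_pos by (intro mult_mono) auto
  finally have kPhi_le: "kPhi \<le> taumin * (alphamin / 2)" by simp
  have "taumin * (A + 2 * ((kgf + kdr) * norm (v k))) \<le> tau k * A + norm (c (x k))"
    using mult_right_mono[OF taumin_le_tau[of k] A_nonneg] taumin_mult_v_le[of k]
    by (simp add: algebra_simps)
  also have "\<dots> < taumin * (alphamin / 2) * eps\<^sup>2"
    using assms mult_right_mono[OF kPhi_le, of "eps\<^sup>2"] by (simp add: shifted_merit_def A_def)
  finally show ?thesis
    using taumin_pos by (simp add: A_def mult.assoc)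
qed

lemma Lg_norm_v_le_if_shifted_merit_small:
  assumes "0 < eps" "shifted_merit k < kPhi * eps\<^sup>2" "eps < norm (u k) / alpha k"
  shows "Lg * norm (v k) \<le> 2 * (kgf + kdr)"
proof -
  let ?W = "kgf + kdr" and ?V = "norm (v k)"
  have "0 \<le> f (x k) - finf + r (x k)"
    using f_lb[OF x_in_X, of k] r_nonneg[of "x k"] by simp
  then have "Lg * (?W * ?V) \<le> Lg * (alphamin * eps\<^sup>2 / 4)"
    using gap_le_if_shifted_merit_small[OF assms(2)] consts_pos by (intro mult_left_mono) auto
  also have "\<dots> = (alphamin * Lg) * (eps\<^sup>2 / 4)"
    by simp
  also have "\<dots> \<le> 1 * (eps\<^sup>2 / 4)"
    using alphamin_mult_Lg_lt_1 by (intro mult_right_mono) auto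
  also have "\<dots> \<le> ?W * ?W"
  proof -
    have "eps\<^sup>2 \<le> ?W\<^sup>2"
      using assms(1,3) prox_residual_le[of k] by (intro power_mono) auto
    then show ?thesis
      unfolding power2_eq_square using zero_le_square[of ?W] by linarith
  qed
  finally have "?W * (Lg * ?V) \<le> ?W * ?W"
    by (simp add: algebra_simps)
  then have "Lg * ?V \<le> ?W"
    using consts_pos by (subst (asm) mult_le_cancel_left_pos) auto
  then show ?thesis
    using consts_pos by simp
qed

(* If norm (u k) / alpha k > eps, a suitable fraction of the step lowers f by more than the
   gap f (x k) - finf that a small shifted merit value allows. *)
lemma prox_residual_le_if_shifted_merit_small:
  assumes eps: "0 < eps" and small: "shifted_merit k < kPhi * eps\<^sup>2"
  shows "norm (u k) / alpha k \<le> eps"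
proof (rule ccontr)
  let ?a = "norm (u k) / alpha k" and ?m = "min (1 / (2 * Lg)) (alpha k / 2)"
  assume "\<not> ?a \<le> eps"
  then have a_gt: "eps < ?a" by simp
  obtain t where t: "0 \<le> t" "t \<le> 1" and t_dec: "Lg / 2 * (t * alpha k)\<^sup>2 - t * alpha k \<le> - ?m"
    using exists_unit_step_quadratic_decrease[OF consts_pos(5) alpha_pos[of k]] by auto
  have "?m * ?a\<^sup>2 \<le> f (x k) - finf + r (x k) + 2 * ((kgf + kdr) * norm (v k))"
    using quadratic_step_bound[OF t Lg_norm_v_le_if_shifted_merit_small[OF eps small a_gt]]
      mult_right_mono[OF t_dec, of "?a\<^sup>2"]
    by (simp add: algebra_simps)
  moreover have "alphamin / 2 * eps\<^sup>2 \<le> ?m * ?a\<^sup>2"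
  proof (rule mult_mono)
    show "alphamin / 2 \<le> ?m"
      using alphamin_mult_Lg_lt_1 alphamin_le_alpha[of k] consts_pos by (simp add: field_simps)
    show "eps\<^sup>2 \<le> ?a\<^sup>2"
      using a_gt eps by (intro power_mono) auto
  qed (use alphamin_pos alpha_pos[of k] consts_pos in auto)
  ultimately show False
    using gap_le_if_shifted_merit_small[OF small] by simp
qed

(* This settles the case B = 0 of the complexity bound, where x_0 itself must be
   eps-stationary. *)
lemma chi_le_if_shifted_merit_small:
  "0 < eps \<Longrightarrow> shifted_merit k < kPhi * eps\<^sup>2 \<Longrightarrow> chi k \<le> eps"
  using norm_c_le_if_shifted_merit_small prox_residual_le_if_shifted_merit_small by (simp add: chi_eq)

definition iteration_bound :: "real \<Rightarrow> int" where
  "iteration_bound eps = \<lfloor>shifted_merit 0 / (kPhi * eps\<^sup>2)\<rfloor>"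

theorem successful_run_length_le:
  assumes "0 < eps" "\<And>k. k1 \<le> k \<Longrightarrow> k < k2 \<Longrightarrow> k \<in> successful \<and> eps < chi k"
  shows "int (k2 - k1) \<le> iteration_bound eps"
proof (cases "k1 \<le> k2")
  case True
  have "{k1..<k2} \<inter> successful = {k1..<k2}"
    using assms(2) by auto
  then have "shifted_merit k2 + real (k2 - k1) * (kPhi * eps\<^sup>2) \<le> shifted_merit k1"
    using shifted_merit_decrease[OF True] assms by simp
  then have "real (k2 - k1) * (kPhi * eps\<^sup>2) \<le> shifted_merit 0"
    using shifted_merit_nonneg[of k2] shifted_merit_antimono[of 0 k1] by linarith
  then show ?thesis
    using kPhi_pos assms(1) by (simp add: iteration_bound_def le_floor_iff pos_le_divide_eq)
next
  case False
  then show ?thesis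
    using shifted_merit_nonneg[of 0] kPhi_pos assms(1) by (simp add: iteration_bound_def)
qed

lemma iterations_before_stationary_le:
  assumes "0 < eps" "\<And>k. k < n \<Longrightarrow> eps < chi k"
  shows "int n \<le> iteration_bound eps + max_unsuccessful"
proof -
  have "shifted_merit n + card ({..<n} \<inter> successful) * (kPhi * eps\<^sup>2) \<le> shifted_merit 0"
    using shifted_merit_decrease[of 0 n eps] assms by (simp add: atLeast0LessThan)
  then have "card ({..<n} \<inter> successful) * (kPhi * eps\<^sup>2) \<le> shifted_merit 0"
    using shifted_merit_nonneg[of n] by linarith
  then have "int (card ({..<n} \<inter> successful)) \<le> iteration_bound eps"
    using kPhi_pos assms(1) by (simp add: iteration_bound_def le_floor_iff pos_le_divide_eq)
  moreover have "int n = int (card ({..<n} \<inter> successful)) + int (card ({..<n} - successful))"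
    using card_Int_Diff[of "{..<n}" successful] by simp
  ultimately show ?thesis
    using card_unsuccessful_le[of n] by linarith
qed

theorem exists_stationary_within:
  assumes "0 < eps"
  shows "\<exists>k. int k \<le> (max_unsuccessful + 1) * iteration_bound eps \<and> chi k \<le> eps"
proof (cases "iteration_bound eps = 0")
  case True
  then have "shifted_merit 0 < kPhi * eps\<^sup>2"
    using kPhi_pos assms by (simp add: iteration_bound_def floor_eq_iff divide_less_eq)
  then show ?thesis
    using chi_le_if_shifted_merit_small[OF assms] True by auto
next
  case False
  let ?U = max_unsuccessful and ?B = "iteration_bound eps"
  have "0 \<le> ?B"
    using shifted_merit_nonneg[of 0] kPhi_pos assms by (simp add: iteration_bound_def)
  then have B: "1 \<le> ?B" using False by simp
  have U: "0 \<le> ?U" by (simp add: max_unsuccessful_def)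
  define n where "n = nat ((?U + 1) * ?B) + 1"
  have n: "int n = (?U + 1) * ?B + 1"
    using U B by (simp add: n_def)
  have "?U \<le> ?U * ?B"
    using U B by (simp add: mult_le_cancel_left1)
  then have "\<not> int n \<le> ?B + ?U"
    using n by (simp add: algebra_simps)
  then obtain k where "k < n" "chi k \<le> eps"
    using iterations_before_stationary_le[OF assms, of n] by force
  moreover have "int k \<le> (?U + 1) * ?B"
    using \<open>k < n\<close> n by linarith
  ultimately show ?thesis by blast
qed

end

theorem theorem3p16:
  fixes f :: "real^'n \<Rightarrow> real" and g :: "real^'n \<Rightarrow> real^'n"
    and c :: "real^'n \<Rightarrow> real^'m" and J :: "real^'n \<Rightarrow> real^'n^'m"
    and r :: "real^'n \<Rightarrow> real"
    and x v u gr :: "nat \<Rightarrow> real^'n" and y :: "nat \<Rightarrow> real^'m"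
    and alpha tau :: "nat \<Rightarrow> real"
    and taum1 kv sigc epstau xi eta sigu :: real
    and X :: "(real^'n) set"
    and finf kgf kc kgc kdr Lg LJ sigmin eps :: real
  assumes m_le_n: "CARD('m) \<le> CARD('n)"
    and f_deriv: "\<And>z. (f has_derivative (\<lambda>h. g z \<bullet> h)) (at z)"
    and g_cont: "continuous_on UNIV g"
    and c_deriv: "\<And>z. (c has_derivative (\<lambda>h. J z *v h)) (at z)"
    and J_cont: "continuous_on UNIV J"
    and r_convex: "convex_on UNIV r" and r_nonneg: "\<And>z. r z \<ge> 0"
    and alpha0_pos: "alpha 0 > 0" and taum1_pos: "taum1 > 0"
    and kv_pos: "kv > 0"
    and sigc: "0 < sigc" "sigc < 1" and epstau: "0 < epstau" "epstau < 1"
    and xi: "0 < xi" "xi < 1" and eta: "0 < eta" "eta < 1"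
    and sigu: "0 < sigu" "sigu \<le> 1/2"
  defines "sigbar \<equiv> sigu + 1/2"
    and "s \<equiv> \<lambda>k. v k + u k"
  assumes
    \<comment> \<open>Step 1\<close>
    step1: "\<And>k. transpose (J (x k)) *v c (x k) \<noteq> 0 \<Longrightarrow>
        v k \<in> range (\<lambda>w. transpose (J (x k)) *v w)
      \<and> norm (v k) \<le> kv * alpha k * norm (transpose (J (x k)) *v c (x k))
      \<and> (\<exists>betac. 0 \<le> betac \<and> betac \<le> kv * alpha k
           \<and> (\<forall>beta. 0 \<le> beta \<and> beta \<le> kv * alpha k \<longrightarrow>
                (1/2) * (norm (c (x k) - betac *\<^sub>R (J (x k) *v (transpose (J (x k)) *v c (x k)))))\<^sup>2
                \<le> (1/2) * (norm (c (x k) - beta *\<^sub>R (J (x k) *v (transpose (J (x k)) *v c (x k)))))\<^sup>2)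
           \<and> norm (c (x k) + J (x k) *v v k)
               \<le> norm (c (x k) + J (x k) *v (- (betac *\<^sub>R (transpose (J (x k)) *v c (x k))))))"
    and step1_zero: "\<And>k. transpose (J (x k)) *v c (x k) = 0 \<Longrightarrow> v k = 0"
    \<comment> \<open>no finite termination\<close>
    and noterm_c: "\<And>k. transpose (J (x k)) *v c (x k) = 0 \<Longrightarrow> c (x k) = 0"
    and noterm_s: "\<And>k. s k \<noteq> 0"
    \<comment> \<open>Step 2\<close>
    and u_feas: "\<And>k. J (x k) *v u k = 0"
    and u_min: "\<And>k w. J (x k) *v w = 0 \<Longrightarrow>
        g (x k) \<bullet> u k + 1 / (2 * alpha k) * (norm (u k))\<^sup>2 + r (x k + v k + u k)
        \<le> g (x k) \<bullet> w + 1 / (2 * alpha k) * (norm w)\<^sup>2 + r (x k + v k + w)"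
    and gr_sub: "\<And>k. subgrad r (x k + s k) (gr k)"
    and kkt: "\<And>k. g (x k) + (1 / alpha k) *\<^sub>R u k + gr k - transpose (J (x k)) *v y k = 0"
  defines "D \<equiv> \<lambda>k. g (x k) \<bullet> s k + sigbar * (norm (s k))\<^sup>2 / alpha k + r (x k + s k) - r (x k)"
    and "taup \<equiv> \<lambda>k. if k = 0 then taum1 else tau (k - 1)"
  assumes
    \<comment> \<open>Step 3\<close>
    tau_upd: "\<And>k. tau k = (if D k \<le> 0 then taup k
       else (let t = (1 - sigc) * (norm (c (x k)) - norm (c (x k) + J (x k) *v v k)) / D k
             in if taup k \<le> t then taup k else min ((1 - epstau) * taup k) t))"
  defines "dq \<equiv> \<lambda>k w t. - t * (g (x k) \<bullet> w + 1 / (2 * alpha k) * (norm w)\<^sup>2 + r (x k + w) - r (x k))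
                  + norm (c (x k)) - norm (c (x k) + J (x k) *v w)"
  defines "S \<equiv> {k. merit f r c (tau k) (x k + s k) \<le> merit f r c (tau k) (x k) - eta * dq k (s k) (tau k)}"
  assumes
    \<comment> \<open>Step 4\<close>
    succ: "\<And>k. k \<in> S \<Longrightarrow> x (Suc k) = x k + s k \<and> alpha (Suc k) = alpha k"
    and unsucc: "\<And>k. k \<notin> S \<Longrightarrow> x (Suc k) = x k \<and> alpha (Suc k) = xi * alpha k"
    \<comment> \<open>Standing assumption\<close>
    and X_open: "open X" and X_convex: "convex X"
    and x_in_X: "\<And>k. x k \<in> X" and trial_in_X: "\<And>k. x k + s k \<in> X"
    and consts_pos: "kgf > 0" "kc > 0" "kgc > 0" "kdr > 0" "Lg > 0" "LJ > 0"
    and f_lb: "\<And>z. z \<in> X \<Longrightarrow> f z \<ge> finf"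
    and g_bd: "\<And>z. z \<in> X \<Longrightarrow> norm (g z) \<le> kgf"
    and c_bd: "\<And>z. z \<in> X \<Longrightarrow> norm (c z) \<le> kc"
    and J_bd: "\<And>z. z \<in> X \<Longrightarrow> spec_norm (J z) \<le> kgc"
    and subgrad_bd: "\<And>z w. z \<in> X \<Longrightarrow> subgrad r z w \<Longrightarrow> norm w \<le> kdr"
    and g_lip: "\<And>z z'. z \<in> X \<Longrightarrow> z' \<in> X \<Longrightarrow> norm (g z - g z') \<le> Lg * norm (z - z')"
    and J_lip: "\<And>z z'. z \<in> X \<Longrightarrow> z' \<in> X \<Longrightarrow> spec_norm (J z - J z') \<le> LJ * norm (z - z')"
    \<comment> \<open>uniform lower bound on singular values\<close>
    and sigmin_pos: "sigmin > 0"
    and sigmin_bd: "\<And>k. sigma_min_mat (J (x k)) \<ge> sigmin"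
    and eps_pos: "eps > 0"
  defines "chi \<equiv> \<lambda>k. max (norm (g (x k) + gr k - transpose (J (x k)) *v y k)) (norm (c (x k)))"
    and "K \<equiv> 2 * kv * kgc * (kgf + kdr + sigbar * kc * kv * kgc)"
  defines "taumintrial \<equiv> min ((1 - sigc) * kv * sigmin\<^sup>2 / K)
                              ((1 - sigc) * (sigmin / kgc)\<^sup>2 / (K * alpha 0))"
  defines "taumin \<equiv> min (tau 0) ((1 - epstau) * taumintrial)"
  defines "alphamin \<equiv> min (alpha 0) (xi * taumin / (taumin * Lg + LJ))"
  defines "kPhi \<equiv> eta * min (sigu * taumin * alphamin)
              (min (sigc * sigmin\<^sup>2 / (2 * kc * (1 + kgc\<^sup>2)))
                   (sigc * sigmin\<^sup>2 * kv * alphamin / (2 * kc)))"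
  defines "B \<equiv> \<lfloor>(tau 0 * (f (x 0) - finf + r (x 0)) + norm (c (x 0))) / (kPhi * eps\<^sup>2)\<rfloor>"
  shows "(\<forall>k1 k2. k1 < k2 \<and> (\<forall>k. k1 \<le> k \<and> k < k2 \<longrightarrow> k \<in> S \<and> chi k > eps)
            \<longrightarrow> int (k2 - k1) \<le> B)
       \<and> (\<exists>k. int k \<le> (max 0 \<lceil>ln (taumin / (alpha 0 * (taumin * Lg + LJ))) / ln xi\<rceil> + 1) * B
              \<and> chi k \<le> eps)"
proof -
  interpret data: sqp_data f g c J r x v u alpha tau taum1 eta sigu .
  have step: "data.step = s" and D: "data.D = D" and tau_prev: "data.tau_prev = taup"
    and successful: "data.successful = S"
    by (simp_all add: fun_eq_iff data.step_def data.D_def data.sigbar_def data.tau_prev_def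
        data.successful_def data.model_decrease_def s_def D_def sigbar_def taup_def S_def dq_def)
  interpret run: sqp_run f g c J r x v u alpha tau taum1 eta sigu gr y kv sigc epstau xi X
      finf kgf kc kgc kdr Lg LJ sigmin
    by (unfold_locales, unfold step D tau_prev successful data.JTc_def data.constr_decrease_def)
      (fact assms tau_upd[unfolded Let_def] step1[THEN conjunct1]
        step1[THEN conjunct2, THEN conjunct1] step1[THEN conjunct2, THEN conjunct2])+
  have chi: "run.chi = chi"
    by (simp add: fun_eq_iff run.chi_def chi_def)
  have taumin: "run.taumin = taumin"
    by (simp add: run.taumin_def taumin_def run.taumintrial_def taumintrial_def run.K_def K_def
        data.sigbar_def sigbar_def)
  have B: "run.iteration_bound eps = B"
    by (simp add: run.iteration_bound_def run.shifted_merit_def B_def run.kPhi_def kPhi_def taumin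
        run.alphamin_def alphamin_def)
  show ?thesis
  proof (intro conjI allI impI)
    fix k1 k2
    assume "k1 < k2 \<and> (\<forall>k. k1 \<le> k \<and> k < k2 \<longrightarrow> k \<in> S \<and> chi k > eps)"
    then show "int (k2 - k1) \<le> B"
      using run.successful_run_length_le[OF eps_pos, of k1 k2] unfolding chi successful B by simp
  next
    show "\<exists>k. int k \<le> (max 0 \<lceil>ln (taumin / (alpha 0 * (taumin * Lg + LJ))) / ln xi\<rceil> + 1) * B
        \<and> chi k \<le> eps"
      using run.exists_stationary_within[OF eps_pos] unfolding chi B run.max_unsuccessful_def taumin .
  qed
qed

end
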